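(* Let $(P,\mathit{dist})$ be a finite metric space with $N=|P|\ge 2$ and doubling dimension $d$. Then the output of Algorithm $\mathrm{ClosestPair}(P,N,d)$ (for any outcome of its random choices) equals the closest-pair distance $\min\{\mathit{dist}(x,y):x,y\in P,\ x\ne y\}$ of $P$.
   Context: For $X\subseteq P$, $p\in P$ and reals $R'\ge R\ge 0$: $\mathit{ball}_X(p,R)=\{x\in X:\mathit{dist}(p,x)\le R\}$ and $\mathit{annulus}_X(p,R,R')=\{x\in X: R<\mathit{dist}(p,x)\le R'\}$. For $X\subseteq P$ with $|X|\ge2$, $\delta(X)=\min\{\mathit{dist}(x,y):x,y\in X,x\ne y\}$. The doubling dimension of $(P,\mathit{dist})$ is $\log_2\lambda$, where $\lambda$ is the smallest integer such that for every $p\in P$ and real $R>0$, $\mathit{ball}_P(p,R)$ is covered by at most $\lambda$ balls $\mathit{ball}_P(q,R/2)$ with $q\in P$; throughout, $d$ denotes the doubling dimension of the whole space $P$. Algorithm $\mathrm{SepAnn}(S,n,d,\mu,c)$: repeat: choose $p$ uniformly at random from $S$; let $R_p=\min\{r>0:|\mathit{ball}_S(p,r)|\ge n/c\}$; until $|\mathit{ball}_S(p,\mu R_p)|\le n/2$; return $p$ and $R'=R_p$. Algorithm $\mathrm{SparseSepAnn}(S,n,d,t)$: set $c=2(4e)^d$; let $(p,R')$ be the output of $\mathrm{SepAnn}(S,n,d,e,c)$; let $R_i=(1+1/t)^iR'$ ($0\le i\le t$) and $A_i=\mathit{annulus}_S(p,R_{i-1},R_i)$ ($1\le i\le t$); repeat: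 choose $i$ uniformly at random from $\{1,\dots,t\}$; until $|A_i|\le n/t$; return $p$ and $R=R_{i-1}$. Algorithm $\mathrm{ClosestPair}(S,n,d)$ (for $S\subseteq P$, $n=|S|\ge2$): if $n<2(16e)^d$, compute $\delta_0=\delta(S)$ by brute force. Otherwise: set $t=\lfloor \frac{1}{16e}(n/2)^{1/d}\rfloor$; let $(p,R)$ be the output of $\mathrm{SparseSepAnn}(S,n,d,t)$; let $S_1=\mathit{ball}_S(p,R)$, $S_2=\mathit{annulus}_S(p,R,(1+1/t)R)$, $S_3=S\setminus(S_1\cup S_2)$; compute $\delta'=\mathrm{ClosestPair}(S_1\cup S_2,|S_1\cup S_2|,d)$ and $\delta''=\mathrm{ClosestPair}(S_2\cup S_3,|S_2\cup S_3|,d)$; set $\delta_0=\min(\delta',\delta'')$. Return $\delta_0$. *)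

theory Defs
  imports Complex_Main
begin

definition sball :: "'a::metric_space set \<Rightarrow> 'a \<Rightarrow> real \<Rightarrow> 'a set" where
  "sball X p R = {x \<in> X. dist p x \<le> R}"

definition sannulus :: "'a::metric_space set \<Rightarrow> 'a \<Rightarrow> real \<Rightarrow> real \<Rightarrow> 'a set" where
  "sannulus X p R R' = {x \<in> X. R < dist p x \<and> dist p x \<le> R'}"

definition delta :: "'a::metric_space set \<Rightarrow> real" where
  "delta X = Min {dist x y | x y. x \<in> X \<and> y \<in> X \<and> x \<noteq> y}"

definition doubling_const :: "'a::metric_space set \<Rightarrow> nat" where
  "doubling_const P = (LEAST lam::nat. \<forall>p\<in>P. \<forall>R>0. \<exists>Q. Q \<subseteq> P \<and> finite Q \<and> card Q \<le> lam \<and>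
       sball P p R \<subseteq> (\<Union>q\<in>Q. sball P q (R/2)))"

definition doubling_dim :: "'a::metric_space set \<Rightarrow> real" where
  "doubling_dim P = log 2 (real (doubling_const P))"

text \<open>R is the minimum of {r > 0. |ball_S(p,r)| \<ge> theta} (if the minimum does not exist,
  there is no such R).\<close>
definition is_min_radius :: "'a::metric_space set \<Rightarrow> 'a \<Rightarrow> real \<Rightarrow> real \<Rightarrow> bool" where
  "is_min_radius S p theta R \<longleftrightarrow>
     R > 0 \<and> real (card (sball S p R)) \<ge> theta \<and>
     (\<forall>r>0. real (card (sball S p r)) \<ge> theta \<longrightarrow> R \<le> r)"

text \<open>Possible outputs (p, R') of SepAnn(S,n,d,mu,c) over all outcomes of its random
  choices (the repeat loop returns exactly those sampled p satisfying the exit test).\<close>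
definition sep_ann_out :: "'a::metric_space set \<Rightarrow> nat \<Rightarrow> real \<Rightarrow> real \<Rightarrow> 'a \<Rightarrow> real \<Rightarrow> bool" where
  "sep_ann_out S n mu c p R' \<longleftrightarrow>
     p \<in> S \<and> is_min_radius S p (real n / c) R' \<and>
     real (card (sball S p (mu * R'))) \<le> real n / 2"

definition sparse_sep_ann_out :: "'a::metric_space set \<Rightarrow> nat \<Rightarrow> real \<Rightarrow> nat \<Rightarrow> 'a \<Rightarrow> real \<Rightarrow> bool" where
  "sparse_sep_ann_out S n d t p R \<longleftrightarrow>
     (\<exists>R'. sep_ann_out S n (exp 1) (2 * (4 * exp 1) powr d) p R' \<and>
        (\<exists>i\<in>{1..t}.
           real (card (sannulus S p ((1 + 1 / real t) ^ (i - 1) * R') ((1 + 1 / real t) ^ i * R')))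
             \<le> real n / real t \<and>
           R = (1 + 1 / real t) ^ (i - 1) * R'))"

text \<open>closest_pair_out d S r: r is a possible output of ClosestPair(S,|S|,d).\<close>
inductive closest_pair_out :: "real \<Rightarrow> 'a::metric_space set \<Rightarrow> real \<Rightarrow> bool" for d :: real where
  base: "real (card S) < 2 * (16 * exp 1) powr d \<Longrightarrow> closest_pair_out d S (delta S)"
| step: "\<not> (real (card S) < 2 * (16 * exp 1) powr d) \<Longrightarrow>
         t = nat \<lfloor>(1 / (16 * exp 1)) * (real (card S) / 2) powr (1 / d)\<rfloor> \<Longrightarrow>
         sparse_sep_ann_out S (card S) d t p R \<Longrightarrow>
         S1 = sball S p R \<Longrightarrow>
         S2 = sannulus S p R ((1 + 1 / real t) * R) \<Longrightarrow>
         S3 = S - (S1 \<union> S2) \<Longrightarrow>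
         closest_pair_out d (S1 \<union> S2) d1 \<Longrightarrow>
         closest_pair_out d (S2 \<union> S3) d2 \<Longrightarrow>
         closest_pair_out d S (min d1 d2)"

end

theory Submission
  imports Defs
begin

(* In a recursive step with n = |S|, SepAnn yields a radius R' such
   that ball_S(p,R') has at least n/c points while ball_S(p,e R') has at most n/2. By the doubling
   property ball(p,R') is covered by lambda^k < n/c balls of radius R'/2^k <= R'/(2t), so two points
   of S lie within R'/t <= R/t of each other and delta(S) <= R/t. A pair split between S1 and S3
   is farther apart than the annulus width R/t, so the closest pair of S lies in S1 \<union> S2 or in
   S2 \<union> S3; both parts keep at least two points because S1 \<union> S2 is contained in ball_S(p,e R'). *)

lemma finite_pairwise_dists:
  assumes "finite X"
  shows "finite {dist x y | x y. x \<in> X \<and> y \<in> X \<and> x \<noteq> y}"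
proof (rule finite_subset)
  show "finite ((\<lambda>(x, y). dist x y) ` (X \<times> X))" using assms by simp
qed force

lemma delta_le_dist:
  assumes "finite X" "x \<in> X" "y \<in> X" "x \<noteq> y"
  shows "delta X \<le> dist x y"
  unfolding delta_def using assms by (intro Min_le finite_pairwise_dists) auto

lemma delta_attained:
  assumes "finite X" "2 \<le> card X"
  obtains x y where "x \<in> X" "y \<in> X" "x \<noteq> y" "delta X = dist x y"
proof -
  have "\<not> card X \<le> Suc 0" using assms(2) by simp
  then obtain a b where "a \<in> X" "b \<in> X" "a \<noteq> b"
    by (auto simp: card_le_Suc0_iff_eq[OF assms(1)])
  then have "{dist x y | x y. x \<in> X \<and> y \<in> X \<and> x \<noteq> y} \<noteq> {}" by auto
  from Min_in[OF finite_pairwise_dists[OF assms(1)] this]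
  have "delta X \<in> {dist x y | x y. x \<in> X \<and> y \<in> X \<and> x \<noteq> y}"
    unfolding delta_def .
  then show ?thesis using that by auto
qed

lemma delta_antimono:
  assumes "finite X" "Y \<subseteq> X" "2 \<le> card Y"
  shows "delta X \<le> delta Y"
proof -
  obtain x y where "x \<in> Y" "y \<in> Y" "x \<noteq> y" "delta Y = dist x y"
    using delta_attained[OF finite_subset[OF assms(2,1)] assms(3)] .
  with assms show ?thesis using delta_le_dist[OF assms(1)] by auto
qed

lemma delta_union_separated:
  assumes "finite S" "A \<union> B = S" "2 \<le> card A" "2 \<le> card B"
    and far: "\<And>u v. u \<in> S - B \<Longrightarrow> v \<in> S - A \<Longrightarrow> delta S < dist u v"
  shows "delta S = min (delta A) (delta B)"
proof -
  have "A \<subseteq> S" "B \<subseteq> S" using assms(2) by auto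
  then have "finite A" "finite B" using assms(1) by (auto intro: finite_subset)
  have "2 \<le> card S" using assms(3) card_mono[OF assms(1) \<open>A \<subseteq> S\<close>] by linarith
  then obtain a b where ab: "a \<in> S" "b \<in> S" "a \<noteq> b" "delta S = dist a b"
    using delta_attained[OF assms(1)] by blast
  have "delta A \<le> delta S \<or> delta B \<le> delta S"
  proof (cases "a \<in> A \<and> b \<in> A \<or> a \<in> B \<and> b \<in> B")
    case True
    then show ?thesis
      using ab delta_le_dist[OF \<open>finite A\<close>] delta_le_dist[OF \<open>finite B\<close>] by auto
  next
    case False
    then have "a \<in> S - B \<and> b \<in> S - A \<or> b \<in> S - B \<and> a \<in> S - A"
      using ab assms(2) by auto
    then show ?thesis using far[of a b] far[of b a] ab(4) by (auto simp: dist_commute)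
  qed
  moreover have "delta S \<le> delta A" "delta S \<le> delta B"
    using delta_antimono[OF assms(1) \<open>A \<subseteq> S\<close> assms(3)]
      delta_antimono[OF assms(1) \<open>B \<subseteq> S\<close> assms(4)] by auto
  ultimately show ?thesis by linarith
qed

lemma delta_ball_annulus_split:
  fixes S :: "'a::metric_space set"
  assumes "finite S"
    and xy: "x \<in> sball S p R" "y \<in> sball S p R" "x \<noteq> y" "dist x y \<le> R2 - R"
    and outside: "card (sball S p R2) + 2 \<le> card S"
    and S1: "S1 = sball S p R" and S2: "S2 = sannulus S p R R2"
    and S3: "S3 = S - (S1 \<union> S2)"
  shows "delta S = min (delta (S1 \<union> S2)) (delta (S2 \<union> S3))"
proof -
  have "R \<le> R2" using xy(4) zero_le_dist[of x y] by linarith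
  then have inner: "S1 \<union> S2 = sball S p R2"
    unfolding S1 S2 sball_def sannulus_def by auto
  have outer: "S2 \<union> S3 = S - S1"
    unfolding S1 S2 S3 sball_def sannulus_def by auto
  have "card {x, y} \<le> card (S1 \<union> S2)"
    using xy \<open>finite S\<close> \<open>R \<le> R2\<close> unfolding inner by (intro card_mono) (auto simp: sball_def)
  then have c12: "2 \<le> card (S1 \<union> S2)" using xy(3) by simp
  have "card (S - sball S p R2) \<le> card (S2 \<union> S3)"
    using \<open>finite S\<close> unfolding outer inner[symmetric] by (intro card_mono) auto
  moreover have "card (S - sball S p R2) = card S - card (sball S p R2)"
    using \<open>finite S\<close> by (intro card_Diff_subset) (auto simp: sball_def)
  ultimately have c23: "2 \<le> card (S2 \<union> S3)" using outside by linarith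
  show ?thesis
  proof (rule delta_union_separated[OF \<open>finite S\<close> _ c12 c23])
    show "S1 \<union> S2 \<union> (S2 \<union> S3) = S"
      unfolding S1 S2 S3 sball_def sannulus_def by auto
    fix u v assume "u \<in> S - (S2 \<union> S3)" "v \<in> S - (S1 \<union> S2)"
    then have "u \<in> S1" "v \<in> S - sball S p R2" unfolding outer inner by auto
    then have "dist p u \<le> R" "R2 < dist p v" unfolding S1 sball_def by auto
    moreover have "delta S \<le> dist x y"
      using xy by (intro delta_le_dist[OF \<open>finite S\<close>]) (auto simp: sball_def)
    moreover have "dist p v \<le> dist p u + dist u v" by (rule dist_triangle)
    ultimately show "delta S < dist u v" using xy(4) by linarith
  qed
qed

lemma doubling_const_cover:
  assumes "finite P" "p \<in> P" "0 < R"
  obtains Q where "Q \<subseteq> P" "finite Q" "card Q \<le> doubling_const P"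
    "sball P p R \<subseteq> (\<Union>q\<in>Q. sball P q (R / 2))"
proof -
  (* The LEAST in doubling_const is attained because the finite P itself is an admissible cover. *)
  have "\<forall>p\<in>P. \<forall>R>0. \<exists>Q. Q \<subseteq> P \<and> finite Q \<and> card Q \<le> card P \<and>
      sball P p R \<subseteq> (\<Union>q\<in>Q. sball P q (R / 2))"
    using assms(1) by (intro ballI allI impI exI[of _ P] conjI) (auto simp: sball_def)
  then have "\<forall>p\<in>P. \<forall>R>0. \<exists>Q. Q \<subseteq> P \<and> finite Q \<and> card Q \<le> doubling_const P \<and>
      sball P p R \<subseteq> (\<Union>q\<in>Q. sball P q (R / 2))"
    unfolding doubling_const_def by (rule LeastI)
  with assms(2,3) show ?thesis using that by blast
qed

lemma doubling_const_cover_refine: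
  assumes "finite P" "Q \<subseteq> P" "finite Q" "0 < r"
  obtains Q' where "Q' \<subseteq> P" "finite Q'" "card Q' \<le> card Q * doubling_const P"
    "(\<Union>q\<in>Q. sball P q r) \<subseteq> (\<Union>q'\<in>Q'. sball P q' (r / 2))"
proof -
  have "\<forall>q\<in>Q. \<exists>C. C \<subseteq> P \<and> finite C \<and> card C \<le> doubling_const P \<and>
      sball P q r \<subseteq> (\<Union>q'\<in>C. sball P q' (r / 2))"
  proof
    fix q assume "q \<in> Q"
    with assms(2) have "q \<in> P" by blast
    then obtain C where "C \<subseteq> P" "finite C" "card C \<le> doubling_const P"
      "sball P q r \<subseteq> (\<Union>q'\<in>C. sball P q' (r / 2))"
      by (rule doubling_const_cover[OF assms(1) _ assms(4)])
    then show "\<exists>C. C \<subseteq> P \<and> finite C \<and> card C \<le> doubling_const P \<and>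
        sball P q r \<subseteq> (\<Union>q'\<in>C. sball P q' (r / 2))" by blast
  qed
  from bchoice[OF this] obtain C where C: "\<And>q. q \<in> Q \<Longrightarrow> C q \<subseteq> P \<and> finite (C q) \<and>
      card (C q) \<le> doubling_const P \<and> sball P q r \<subseteq> (\<Union>q'\<in>C q. sball P q' (r / 2))"
    by blast
  show ?thesis
  proof
    show "(\<Union>q\<in>Q. C q) \<subseteq> P" "finite (\<Union>q\<in>Q. C q)" using C assms(3) by auto
    have "card (\<Union>q\<in>Q. C q) \<le> (\<Sum>q\<in>Q. card (C q))" by (rule card_UN_le[OF assms(3)])
    also have "\<dots> \<le> (\<Sum>q\<in>Q. doubling_const P)" using C by (intro sum_mono) blast
    finally show "card (\<Union>q\<in>Q. C q) \<le> card Q * doubling_const P" by simp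
    show "(\<Union>q\<in>Q. sball P q r) \<subseteq> (\<Union>q'\<in>(\<Union>q\<in>Q. C q). sball P q' (r / 2))"
    proof (rule UN_least)
      fix q assume "q \<in> Q"
      then have "(\<Union>q'\<in>C q. sball P q' (r / 2)) \<subseteq> (\<Union>q'\<in>(\<Union>q\<in>Q. C q). sball P q' (r / 2))"
        by (intro UN_mono) auto
      with C[OF \<open>q \<in> Q\<close>] show "sball P q r \<subseteq> (\<Union>q'\<in>(\<Union>q\<in>Q. C q). sball P q' (r / 2))"
        by (meson order_trans)
    qed
  qed
qed

lemma doubling_const_cover_power:
  assumes "finite P" "p \<in> P" "0 < R"
  shows "\<exists>Q. Q \<subseteq> P \<and> finite Q \<and> card Q \<le> doubling_const P ^ k \<and>
    sball P p R \<subseteq> (\<Union>q\<in>Q. sball P q (R / 2 ^ k))"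
proof (induction k)
  case 0
  have "sball P p R \<subseteq> (\<Union>q\<in>{p}. sball P q (R / 2 ^ 0))" by simp
  with assms(2) show ?case by (intro exI[of _ "{p}"]) simp
next
  case (Suc k)
  then obtain Q where Q: "Q \<subseteq> P" "finite Q" "card Q \<le> doubling_const P ^ k"
    "sball P p R \<subseteq> (\<Union>q\<in>Q. sball P q (R / 2 ^ k))" by blast
  have "0 < R / 2 ^ k" using assms(3) by simp
  then obtain Q' where Q': "Q' \<subseteq> P" "finite Q'" "card Q' \<le> card Q * doubling_const P"
    "(\<Union>q\<in>Q. sball P q (R / 2 ^ k)) \<subseteq> (\<Union>q'\<in>Q'. sball P q' (R / 2 ^ k / 2))"
    by (rule doubling_const_cover_refine[OF assms(1) Q(1,2)])
  have "card Q' \<le> doubling_const P ^ Suc k"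
    using Q(3) Q'(3) by (metis le_trans mult_le_mono1 power_Suc2)
  moreover have "sball P p R \<subseteq> (\<Union>q'\<in>Q'. sball P q' (R / 2 ^ k / 2))"
    using Q(4) Q'(4) by (rule order_trans)
  then have "sball P p R \<subseteq> (\<Union>q'\<in>Q'. sball P q' (R / 2 ^ Suc k))"
    by (simp only: power_Suc2 divide_divide_eq_left)
  ultimately show ?case using Q'(1,2) by blast
qed

lemma doubling_const_close_pair:
  assumes "finite P" "p \<in> P" "0 < R" "A \<subseteq> sball P p R" "doubling_const P ^ k < card A"
  obtains x y where "x \<in> A" "y \<in> A" "x \<noteq> y" "dist x y \<le> 2 * R / 2 ^ k"
proof -
  obtain Q where Q: "finite Q" "card Q \<le> doubling_const P ^ k"
    "sball P p R \<subseteq> (\<Union>q\<in>Q. sball P q (R / 2 ^ k))"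
    using doubling_const_cover_power[OF assms(1-3), of k] by meson
  have "\<forall>x\<in>A. \<exists>q. q \<in> Q \<and> x \<in> sball P q (R / 2 ^ k)"
  proof
    fix x assume "x \<in> A"
    then have "x \<in> (\<Union>q\<in>Q. sball P q (R / 2 ^ k))" using assms(4) Q(3) by blast
    then show "\<exists>q. q \<in> Q \<and> x \<in> sball P q (R / 2 ^ k)" by blast
  qed
  from bchoice[OF this] obtain centre
    where centre: "\<forall>x\<in>A. centre x \<in> Q \<and> x \<in> sball P (centre x) (R / 2 ^ k)" ..
  have "\<not> inj_on centre A"
  proof
    assume "inj_on centre A"
    then have "card A \<le> card Q" using centre Q(1) by (intro card_inj_on_le) auto
    with Q(2) assms(5) show False by linarith
  qed
  then obtain x y where xy: "x \<in> A" "y \<in> A" "x \<noteq> y" "centre x = centre y"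
    unfolding inj_on_def by blast
  have "dist x y \<le> dist (centre x) x + dist (centre y) y"
    using dist_triangle3[of x y "centre x"] xy(4) by simp
  also have "\<dots> \<le> R / 2 ^ k + R / 2 ^ k" using centre xy(1,2) by (intro add_mono) (simp_all add: sball_def)
  also have "\<dots> = 2 * R / 2 ^ k" by simp
  finally show ?thesis using that xy(1-3) by blast
qed

lemma doubling_dim_nonneg: "0 \<le> doubling_dim P"
  unfolding doubling_dim_def by (cases "doubling_const P = 0") (simp_all add: log_def)

lemma doubling_const_eq_powr:
  assumes "0 < doubling_dim P"
  shows "real (doubling_const P) = 2 powr doubling_dim P"
proof -
  have "doubling_const P \<noteq> 0" using assms unfolding doubling_dim_def by (intro notI) (simp add: log_def)
  then show ?thesis unfolding doubling_dim_def by simp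
qed

lemma recursion_scale_exists:
  fixes d n :: real and t :: nat
  assumes "0 < d" "0 < n" "1 \<le> t" "real t \<le> 1 / (16 * exp 1) * (n / 2) powr (1 / d)"
  obtains k where "2 * t \<le> 2 ^ k" "(2 powr d) ^ k < n / (2 * (4 * exp 1) powr d)"
proof -
  obtain m where m: "2 ^ m < 2 * t" "2 * t \<le> 2 ^ (m + 1)"
    using ex_power_ivl2[of 2 "2 * t"] assms(3) by auto
  define k where "k = m + 1"
  have "(2 powr d) ^ k = (2 powr real k) powr d" by (simp add: powr_power powr_powr)
  also have "\<dots> = real (2 ^ k) powr d" by (simp add: powr_realpow)
  also have "\<dots> < (4 * real t) powr d"
  proof -
    have "2 ^ k < 4 * t" using m(1) unfolding k_def by simp
    then have "real (2 ^ k) < 4 * real t" by linarith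
    then show ?thesis using assms(1) by (intro powr_less_mono2) auto
  qed
  also have "\<dots> \<le> ((n / 2) powr (1 / d) / (4 * exp 1)) powr d"
    using assms(1,4) by (intro powr_mono2) (auto simp: field_simps)
  also have "\<dots> = ((n / 2) powr (1 / d)) powr d / (4 * exp 1) powr d"
    by (rule powr_divide)
  also have "\<dots> = (n / 2) / (4 * exp 1) powr d"
    using assms(1,2) by (simp add: powr_powr)
  finally have "(2 powr d) ^ k < n / (2 * (4 * exp 1) powr d)" by simp
  with m(2) show ?thesis using that unfolding k_def by blast
qed

lemma sparse_sep_ann_outD:
  assumes "sparse_sep_ann_out S n d t p R"
  obtains R' where "p \<in> S" "1 \<le> t" "0 < R'" "R' \<le> R" "(1 + 1 / real t) * R \<le> exp 1 * R'"
    "real n / (2 * (4 * exp 1) powr d) \<le> real (card (sball S p R'))"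
    "real (card (sball S p (exp 1 * R'))) \<le> real n / 2"
proof -
  define q where "q = 1 + 1 / real t"
  obtain R' i where sep: "sep_ann_out S n (exp 1) (2 * (4 * exp 1) powr d) p R'"
    and i: "1 \<le> i" "i \<le> t" and R: "R = q ^ (i - 1) * R'"
    using assms unfolding sparse_sep_ann_out_def q_def by auto
  have "0 < R'" using sep unfolding sep_ann_out_def is_min_radius_def by simp
  have "1 \<le> q" unfolding q_def by simp
  have "R' \<le> R" unfolding R using \<open>0 < R'\<close> \<open>1 \<le> q\<close> by (simp add: one_le_power)
  have "q * R = q ^ i * R'" unfolding R using i(1) by (cases i) auto
  also have "\<dots> \<le> q ^ t * R'"
    using i \<open>1 \<le> q\<close> \<open>0 < R'\<close> by (intro mult_right_mono power_increasing) auto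
  also have "\<dots> \<le> exp 1 * R'"
    unfolding q_def using i \<open>0 < R'\<close> exp_ge_one_plus_x_over_n_power_n[where x = 1 and n = t]
    by (intro mult_right_mono) auto
  finally have "q * R \<le> exp 1 * R'" .
  with sep i \<open>0 < R'\<close> \<open>R' \<le> R\<close> show ?thesis
    using that unfolding q_def sep_ann_out_def is_min_radius_def by auto
qed

lemma closest_pair_recursion_params:
  assumes "\<not> real n < 2 * (16 * exp 1) powr d" "0 \<le> d"
    and "1 \<le> nat \<lfloor>1 / (16 * exp 1) * (real n / 2) powr (1 / d)\<rfloor>"
  shows "0 < d" "3 \<le> n"
proof -
  have "0 < 2 * (16 * exp 1) powr d" by simp
  with assms(1) have "0 < n" by linarith
  have "1 < 16 * exp (1::real)" using one_le_exp_iff[of 1] by linarith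
  then have "1 / (16 * exp 1) < (1::real)" by simp
  show "0 < d"
  proof (rule ccontr)
    assume "\<not> 0 < d"
    with assms(2) have "d = 0" by simp
    with \<open>0 < n\<close> \<open>1 / (16 * exp 1) < 1\<close> assms(3) show False by simp
  qed
  with \<open>1 < 16 * exp 1\<close> have "1 < (16 * exp 1) powr d" by (rule gr_one_powr)
  with assms(1) show "3 \<le> n" by simp
qed

lemma closest_pair_recursion_close_pair:
  fixes S P :: "'a::metric_space set"
  assumes "finite P" "S \<subseteq> P"
    and big: "\<not> real (card S) < 2 * (16 * exp 1) powr doubling_dim P"
    and t: "t = nat \<lfloor>1 / (16 * exp 1) * (real (card S) / 2) powr (1 / doubling_dim P)\<rfloor>"
    and sparse: "sparse_sep_ann_out S (card S) (doubling_dim P) t p R"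
  obtains x y where "x \<in> sball S p R" "y \<in> sball S p R" "x \<noteq> y"
    "dist x y \<le> (1 + 1 / real t) * R - R"
    "card (sball S p ((1 + 1 / real t) * R)) + 2 \<le> card S"
proof -
  define n where "n = card S"
  define d where "d = doubling_dim P"
  obtain R' where "p \<in> S" "1 \<le> t" "0 < R'" "R' \<le> R" and outer: "(1 + 1 / real t) * R \<le> exp 1 * R'"
    and dense: "real n / (2 * (4 * exp 1) powr d) \<le> real (card (sball S p R'))"
    and sparse_ball: "real (card (sball S p (exp 1 * R'))) \<le> real n / 2"
    using sparse_sep_ann_outD[OF sparse] unfolding n_def d_def by blast
  have "0 < d" "3 \<le> n"
    using closest_pair_recursion_params[of n d] big t \<open>1 \<le> t\<close> doubling_dim_nonneg[of P]
    unfolding n_def d_def by auto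
  have "real t \<le> 1 / (16 * exp 1) * (real n / 2) powr (1 / d)"
    unfolding t n_def d_def by simp
  moreover have "0 < real n" using \<open>3 \<le> n\<close> by simp
  ultimately obtain k where k: "2 * t \<le> 2 ^ k" "(2 powr d) ^ k < real n / (2 * (4 * exp 1) powr d)"
    using recursion_scale_exists[OF \<open>0 < d\<close> _ \<open>1 \<le> t\<close>] by blast
  have "real (doubling_const P ^ k) < real (card (sball S p R'))"
    using k(2) dense doubling_const_eq_powr[of P] \<open>0 < d\<close> unfolding d_def by simp
  then have "doubling_const P ^ k < card (sball S p R')" by linarith
  moreover have "sball S p R' \<subseteq> sball P p R'" using assms(2) by (auto simp: sball_def)
  ultimately obtain x y where xy: "x \<in> sball S p R'" "y \<in> sball S p R'" "x \<noteq> y"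
    "dist x y \<le> 2 * R' / 2 ^ k"
    using doubling_const_close_pair[OF assms(1) _ \<open>0 < R'\<close>] \<open>p \<in> S\<close> assms(2) by blast
  have "2 * R' / 2 ^ k \<le> R' / real t"
  proof -
    have "2 * real t \<le> 2 ^ k" using k(1) by (metis of_nat_le_iff of_nat_mult of_nat_numeral of_nat_power)
    then show ?thesis using \<open>0 < R'\<close> \<open>1 \<le> t\<close> by (simp add: field_simps)
  qed
  also have "\<dots> \<le> R / real t" using \<open>R' \<le> R\<close> by (simp add: divide_right_mono)
  also have "\<dots> = (1 + 1 / real t) * R - R" by (simp add: field_simps)
  finally have "dist x y \<le> (1 + 1 / real t) * R - R" using xy(4) by linarith
  moreover have "x \<in> sball S p R" "y \<in> sball S p R" using xy(1,2) \<open>R' \<le> R\<close> by (auto simp: sball_def)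
  moreover have "card (sball S p ((1 + 1 / real t) * R)) \<le> card (sball S p (exp 1 * R'))"
    using outer \<open>finite P\<close> assms(2) by (intro card_mono) (auto simp: sball_def intro: finite_subset)
  with sparse_ball \<open>3 \<le> n\<close> have "card (sball S p ((1 + 1 / real t) * R)) + 2 \<le> card S"
    unfolding n_def by linarith
  ultimately show ?thesis using that xy(3) by blast
qed

lemma closest_pair_out_eq_delta:
  fixes P S :: "'a::metric_space set"
  assumes "closest_pair_out (doubling_dim P) S r" "finite P" "S \<subseteq> P"
  shows "r = delta S"
  using assms
proof (induction rule: closest_pair_out.induct)
  case (base S)
  then show ?case by simp
next
  case (step S t p R S1 S2 S3 d1 d2)
  obtain x y where "x \<in> sball S p R" "y \<in> sball S p R" "x \<noteq> y"
    "dist x y \<le> (1 + 1 / real t) * R - R"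
    "card (sball S p ((1 + 1 / real t) * R)) + 2 \<le> card S"
    using closest_pair_recursion_close_pair[OF step.prems step.hyps(1-3)] by blast
  note split = delta_ball_annulus_split[OF finite_subset[OF step.prems(2,1)] this step.hyps(4-6)]
  have "S1 \<union> S2 \<subseteq> P" "S2 \<union> S3 \<subseteq> P"
    using step.prems(2) unfolding step.hyps(4-6) sball_def sannulus_def by auto
  with step.IH step.prems(1) have "d1 = delta (S1 \<union> S2)" "d2 = delta (S2 \<union> S3)" by auto
  with split show ?case by simp
qed

theorem corollary1:
  fixes P :: "'a::metric_space set" and r :: real
  assumes "finite P" and "card P \<ge> 2"
    and "closest_pair_out (doubling_dim P) P r"
  shows "r = Min {dist x y | x y. x \<in> P \<and> y \<in> P \<and> x \<noteq> y}"
  using closest_pair_out_eq_delta[OF assms(3,1) order_refl] unfolding delta_def .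

end
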